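(* Let $\mathcal{K}^{\langle\infty\rangle}$ be an unbounded simple nested fractal. For every $M\in\mathbb{Z}$ there exist positive constants $C_6(M),C_7(M)$ such that for all $x,y\in\mathcal{K}^{\langle\infty\rangle}$, $$C_6(M)\,|x-y|\le d_M(x,y)\le\max\{2,\ C_7(M)\,|x-y|^{d_f}\},$$ where $d_f=\log N/\log L$.
   Context: Setting: $L>1$, $N\ge2$, $\nu_1=0,\dots,\nu_N\in\mathbb{R}^2$, $\Psi_i(x)=x/L+\nu_i$, and $\mathcal{K}^{\langle 0\rangle}=\bigcup_i\Psi_i(\mathcal{K}^{\langle 0\rangle})$ is a planar simple nested fractal (with $V_0^{\langle0\rangle}$ its set of essential fixed points, $k=\#V_0^{\langle0\rangle}\ge3$). $\mathcal{K}^{\langle M\rangle}=L^M\mathcal{K}^{\langle 0\rangle}$, $\mathcal{K}^{\langle\infty\rangle}=\bigcup_{M\ge0}\mathcal{K}^{\langle M\rangle}$. An $M$-complex is $\mathcal{K}^{\langle M\rangle}+\sum_{j=M+1}^{J}L^j\nu_{i_j}$ ($J\ge M+1$, $i_j\in\{1,\dots,N\}$); $\mathcal{T}_M$ is the set of all $M$-complexes. The $M$-graph distance: $d_M(x,y)=0$ if $x=y$; $d_M(x,y)=1$ if $x\ne y$ and some $\Delta_M\in\mathcal{T}_M$ contains both; otherwise $d_M(x,y)$ is the smallest $n>1$ for which there exist $\Delta_M^{(1)},\dots,\Delta_M^{(n)}\in\mathcal{T}_M$ with $x\in\Delta_M^{(1)}$, $y\in\Delta_M^{(n)}$ and $\Delta_M^{(i)}\cap\Delta_M^{(i+1)}\ne\emptyset$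 for $1\le i\le n-1$. $|\cdot|$ is the Euclidean norm. *)

theory Defs
  imports "HOL-Analysis.Analysis"
begin

type_synonym pt = "real ^ 2"

definition Psi :: "real \<Rightarrow> (nat \<Rightarrow> pt) \<Rightarrow> nat \<Rightarrow> pt \<Rightarrow> pt" where
  "Psi L \<nu> i x = (1 / L) *\<^sub>R x + \<nu> i"

definition Psi_word :: "real \<Rightarrow> (nat \<Rightarrow> pt) \<Rightarrow> nat list \<Rightarrow> pt \<Rightarrow> pt" where
  "Psi_word L \<nu> w = foldr (\<lambda>i f. Psi L \<nu> i \<circ> f) w id"

definition words :: "nat \<Rightarrow> nat \<Rightarrow> nat list set" where
  "words N n = {w. length w = n \<and> set w \<subseteq> {1..N}}"

definition fixed_pts :: "real \<Rightarrow> nat \<Rightarrow> (nat \<Rightarrow> pt) \<Rightarrow> pt set" where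
  "fixed_pts L N \<nu> = {x. \<exists>i\<in>{1..N}. Psi L \<nu> i x = x}"

definition ess_fixed_pts :: "real \<Rightarrow> nat \<Rightarrow> (nat \<Rightarrow> pt) \<Rightarrow> pt set" where
  "ess_fixed_pts L N \<nu> = {x \<in> fixed_pts L N \<nu>. \<exists>y \<in> fixed_pts L N \<nu>. y \<noteq> x \<and>
      (\<exists>i\<in>{1..N}. \<exists>j\<in>{1..N}. i \<noteq> j \<and> Psi L \<nu> i x = Psi L \<nu> j y)}"

text \<open>Reflection in the perpendicular bisector of the segment [x,y].\<close>
definition refl_bis :: "pt \<Rightarrow> pt \<Rightarrow> pt \<Rightarrow> pt" where
  "refl_bis x y z = z - (2 * ((z - (1/2) *\<^sub>R (x + y)) \<bullet> (y - x)) / (norm (y - x))\<^sup>2) *\<^sub>R (y - x)"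

definition simple_nested_fractal :: "real \<Rightarrow> nat \<Rightarrow> (nat \<Rightarrow> pt) \<Rightarrow> pt set \<Rightarrow> bool" where
  "simple_nested_fractal L N \<nu> K \<longleftrightarrow>
     L > 1 \<and> N \<ge> 2 \<and> \<nu> 1 = 0 \<and>
     compact K \<and> K \<noteq> {} \<and> K = (\<Union>i\<in>{1..N}. Psi L \<nu> i ` K) \<and>
     card (ess_fixed_pts L N \<nu>) \<ge> 3 \<and>
     \<comment> \<open>open set condition\<close>
     (\<exists>U. open U \<and> bounded U \<and> U \<noteq> {} \<and> (\<forall>i\<in>{1..N}. Psi L \<nu> i ` U \<subseteq> U) \<and>
          (\<forall>i\<in>{1..N}. \<forall>j\<in>{1..N}. i \<noteq> j \<longrightarrow> Psi L \<nu> i ` U \<inter> Psi L \<nu> j ` U = {})) \<and>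
     \<comment> \<open>connectivity: any two 1-cells are joined by a chain of intersecting 1-cells\<close>
     (\<forall>a\<in>{1..N}. \<forall>b\<in>{1..N}. \<exists>n c. c 0 = a \<and> c n = b \<and> (\<forall>l\<le>n. c l \<in> {1..N}) \<and>
          (\<forall>l<n. Psi L \<nu> (c l) ` K \<inter> Psi L \<nu> (c (Suc l)) ` K \<noteq> {})) \<and>
     \<comment> \<open>symmetry\<close>
     (\<forall>x\<in>ess_fixed_pts L N \<nu>. \<forall>y\<in>ess_fixed_pts L N \<nu>. x \<noteq> y \<longrightarrow> (\<forall>n.
          refl_bis x y ` (\<Union>w\<in>words N n. Psi_word L \<nu> w ` ess_fixed_pts L N \<nu>)
            \<subseteq> (\<Union>w\<in>words N n. Psi_word L \<nu> w ` ess_fixed_pts L N \<nu>))) \<and>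
     \<comment> \<open>nesting\<close>
     (\<forall>n\<ge>1. \<forall>w\<in>words N n. \<forall>w'\<in>words N n. w \<noteq> w' \<longrightarrow>
          Psi_word L \<nu> w ` K \<inter> Psi_word L \<nu> w' ` K =
          Psi_word L \<nu> w ` ess_fixed_pts L N \<nu> \<inter> Psi_word L \<nu> w' ` ess_fixed_pts L N \<nu>)"

definition Kscaled :: "real \<Rightarrow> pt set \<Rightarrow> int \<Rightarrow> pt set" where
  "Kscaled L K M = (\<lambda>x. (L powr real_of_int M) *\<^sub>R x) ` K"

definition Kinf :: "real \<Rightarrow> pt set \<Rightarrow> pt set" where
  "Kinf L K = (\<Union>M::nat. Kscaled L K (int M))"

definition complexes :: "real \<Rightarrow> nat \<Rightarrow> (nat \<Rightarrow> pt) \<Rightarrow> pt set \<Rightarrow> int \<Rightarrow> pt set set" where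
  "complexes L N \<nu> K M = {(\<lambda>x. x + (\<Sum>j\<in>{M+1..J}. (L powr real_of_int j) *\<^sub>R \<nu> (i j))) ` Kscaled L K M
       | J i. J \<ge> M + 1 \<and> (\<forall>j\<in>{M+1..J}. i j \<in> {1..N})}"

definition complex_chain :: "real \<Rightarrow> nat \<Rightarrow> (nat \<Rightarrow> pt) \<Rightarrow> pt set \<Rightarrow> int \<Rightarrow> nat \<Rightarrow> pt \<Rightarrow> pt \<Rightarrow> bool" where
  "complex_chain L N \<nu> K M n x y \<longleftrightarrow> (\<exists>D :: nat \<Rightarrow> pt set.
      (\<forall>l\<in>{1..n}. D l \<in> complexes L N \<nu> K M) \<and> x \<in> D 1 \<and> y \<in> D n \<and>
      (\<forall>l\<in>{1..<n}. D l \<inter> D (Suc l) \<noteq> {}))"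

definition dM :: "real \<Rightarrow> nat \<Rightarrow> (nat \<Rightarrow> pt) \<Rightarrow> pt set \<Rightarrow> int \<Rightarrow> pt \<Rightarrow> pt \<Rightarrow> nat" where
  "dM L N \<nu> K M x y =
     (if x = y then 0
      else if (\<exists>D\<in>complexes L N \<nu> K M. x \<in> D \<and> y \<in> D) then 1
      else (LEAST n. n > 1 \<and> complex_chain L N \<nu> K M n x y))"

end

(*
  Lower bound: an M-complex is a translate of L^M K, so it has diameter at most L^M diam K, and a
  chain of n complexes from x to y gives |x - y| <= n L^M diam K.

  Upper bound: the heart of the matter is a uniform separation of cells, namely a constant c > 0
  such that disjoint n-cells of K are at distance at least c L^-n.  It is proved by induction on n
  for a cell and the translate of another cell, the translation ranging over a finite set of offsets
  (differences of essential fixed points, and rescaled differences of the nu_i) for which the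
  nesting axiom propagates to all levels.  Given the separation, if |x - y| < c L^m then, after
  rescaling x and y into K, they lie in two intersecting cells; each of these cells is joined by a
  chain of at most N^(m-M) subcells which become M-complexes after scaling back.  Taking m with
  L^(m-1) <= |x - y| / (c L^M) < L^m gives d_M(x, y) <= 2 N^(m-M) <= C |x - y|^d_f, because
  N = L^d_f.
*)

theory Submission
  imports Defs
begin

section \<open>Chains of linked sets\<close>

definition linked_chain :: "'a set list \<Rightarrow> 'a \<Rightarrow> 'a \<Rightarrow> bool" where
  "linked_chain Ds x y \<longleftrightarrow>
     Ds \<noteq> [] \<and> x \<in> hd Ds \<and> y \<in> last Ds \<and> successively (\<lambda>A B. A \<inter> B \<noteq> {}) Ds"

lemma linked_chain_singleton: "linked_chain [D] x y \<longleftrightarrow> x \<in> D \<and> y \<in> D"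
  by (simp add: linked_chain_def)

lemma linked_chain_length_le_1:
  assumes "linked_chain Ds x y" "length Ds \<le> 1"
  obtains D where "Ds = [D]" "x \<in> D" "y \<in> D"
proof -
  from assms have "Ds \<noteq> []"
    by (simp add: linked_chain_def)
  with assms(2) obtain D where "Ds = [D]"
    by (cases Ds) auto
  with assms(1) show ?thesis
    using that by (simp add: linked_chain_singleton)
qed

lemma linked_chain_Cons_Cons:
  "linked_chain (D # E # Es) x y \<longleftrightarrow> x \<in> D \<and> D \<inter> E \<noteq> {} \<and> (\<exists>z. linked_chain (E # Es) z y)"
  by (auto simp: linked_chain_def)

lemma linked_chain_append:
  "linked_chain As x z \<Longrightarrow> linked_chain Bs z y \<Longrightarrow> linked_chain (As @ Bs) x y"
  by (auto simp: linked_chain_def successively_append_iff)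

lemma linked_chain_image:
  "linked_chain Ds x y \<Longrightarrow> linked_chain (map ((`) h) Ds) (h x) (h y)"
  by (auto simp: linked_chain_def successively_map hd_map last_map elim!: successively_mono)

lemma linked_chain_remove_loop:
  assumes "linked_chain (As @ D # Bs @ D # Cs) x y"
  shows "linked_chain (As @ D # Cs) x y"
proof -
  let ?meet = "\<lambda>A B. A \<inter> B \<noteq> {}"
  from assms have "successively ?meet (As @ (D # Bs) @ (D # Cs))"
    by (simp add: linked_chain_def)
  then have "successively ?meet As" "As = [] \<or> ?meet (last As) D"
    and "successively ?meet ((D # Bs) @ (D # Cs))"
    unfolding successively_append_iff[of ?meet As] by auto
  then have "successively ?meet (As @ D # Cs)"
    unfolding successively_append_iff[of ?meet "D # Bs"] successively_append_iff[of ?meet As]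
    by auto
  moreover have "hd (As @ D # Cs) = hd (As @ D # Bs @ D # Cs)"
    by (cases As) auto
  moreover have "last (As @ D # Cs) = last (As @ D # Bs @ D # Cs)"
    by (cases Cs rule: rev_cases) auto
  ultimately show ?thesis
    using assms by (simp add: linked_chain_def)
qed

lemma linked_chain_distinct:
  "linked_chain Ds x y \<Longrightarrow> \<exists>Ds'. linked_chain Ds' x y \<and> set Ds' \<subseteq> set Ds \<and> distinct Ds'"
proof (induction "length Ds" arbitrary: Ds rule: less_induct)
  case less
  show ?case
  proof (cases "distinct Ds")
    case False
    then obtain As D Bs Cs where Ds: "Ds = As @ [D] @ Bs @ [D] @ Cs"
      using not_distinct_decomp by blast
    with less.prems have "linked_chain (As @ D # Cs) x y"
      using linked_chain_remove_loop[of As D Bs Cs x y] by simp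
    moreover have "length (As @ D # Cs) < length Ds"
      using Ds by simp
    ultimately obtain Ds' where "linked_chain Ds' x y" "set Ds' \<subseteq> set (As @ D # Cs)" "distinct Ds'"
      using less.hyps by blast
    moreover have "set (As @ D # Cs) \<subseteq> set Ds"
      using Ds by auto
    ultimately show ?thesis
      by blast
  qed (use less.prems in blast)
qed

lemma linked_chain_shorten:
  assumes "linked_chain Ds x y" "set Ds \<subseteq> S" "finite S"
  shows "\<exists>Ds'. linked_chain Ds' x y \<and> set Ds' \<subseteq> S \<and> length Ds' \<le> card S"
proof -
  obtain Ds' where "linked_chain Ds' x y" "set Ds' \<subseteq> S" "distinct Ds'"
    using linked_chain_distinct[OF assms(1)] assms(2) by blast
  then show ?thesis
    using assms(3) by (metis card_mono distinct_card)
qed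

lemma linked_chain_dist_le:
  assumes "linked_chain Ds x y"
    and "\<And>D a b. D \<in> set Ds \<Longrightarrow> a \<in> D \<Longrightarrow> b \<in> D \<Longrightarrow> dist a b \<le> B"
  shows "dist x y \<le> real (length Ds) * B"
  using assms
proof (induction Ds arbitrary: x)
  case Nil
  then show ?case by (simp add: linked_chain_def)
next
  case (Cons D Es)
  show ?case
  proof (cases Es)
    case Nil
    with Cons.prems show ?thesis by (simp add: linked_chain_singleton)
  next
    case (Cons E Es')
    with Cons.prems(1) obtain z where "x \<in> D" "D \<inter> E \<noteq> {}" "linked_chain Es z y"
      by (auto simp: linked_chain_Cons_Cons)
    moreover from this obtain p where "p \<in> D" "p \<in> E"
      by blast
    ultimately have "dist x p \<le> B" "dist p y \<le> real (length Es) * B"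
      using Cons.prems(2) Cons.IH[of p] \<open>Es = E # Es'\<close>
      by (auto simp: linked_chain_def)
    then show ?thesis
      using dist_triangle[of x y p] by (simp add: algebra_simps)
  qed
qed

lemma chain_of_sets_connects:
  assumes trans: "\<And>x y z. R x y \<Longrightarrow> R y z \<Longrightarrow> R x z"
    and within: "\<And>l x y. l \<le> m \<Longrightarrow> x \<in> A l \<Longrightarrow> y \<in> A l \<Longrightarrow> R x y"
    and meet: "\<And>l. l < m \<Longrightarrow> A l \<inter> A (Suc l) \<noteq> {}"
    and "x \<in> A 0" "y \<in> A m"
  shows "R x y"
proof -
  have "\<forall>z\<in>A j. R x z" if "j \<le> m" for j
    using that
  proof (induction j)
    case 0
    then show ?case
      using within \<open>x \<in> A 0\<close> by blast
  next
    case (Suc j)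
    then obtain p where "p \<in> A j" "p \<in> A (Suc j)"
      using meet[of j] by auto
    with Suc trans within show ?case
      by (meson Suc_leD)
  qed
  with \<open>y \<in> A m\<close> show ?thesis
    by blast
qed

lemma eventually_at_right_0_imp_pos:
  "eventually P (at_right (0::real)) \<Longrightarrow> \<exists>d>0. P d"
  using eventually_happens'[OF trivial_limit_at_right_real]
    eventually_conj[OF eventually_at_right_less] by blast

lemma eventually_near_closed_imp_mem:
  fixes S :: "'a::heine_borel set"
  assumes "closed S"
  shows "\<forall>\<^sub>F d in at_right 0. \<forall>z\<in>S. dist a z < d \<longrightarrow> a \<in> S"
proof (cases "a \<in> S")
  case False
  then obtain d where "d > 0" "\<forall>z\<in>S. d \<le> dist a z"
    using separate_point_closed[OF assms] by blast
  then show ?thesis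
    unfolding eventually_at_right_field by (intro exI[of _ d]) force
qed simp

lemma eventually_le_dist_compact_closed:
  fixes A B :: "'a::heine_borel set"
  assumes "compact A" "closed B" "A \<inter> B = {}"
  shows "\<forall>\<^sub>F d in at_right 0. \<forall>x\<in>A. \<forall>y\<in>B. d \<le> dist x y"
proof -
  obtain d where "d > 0" "\<forall>x\<in>A. \<forall>y\<in>B. d \<le> dist x y"
    using separate_compact_closed[OF assms] by blast
  then show ?thesis
    unfolding eventually_at_right_field by (intro exI[of _ d]) force
qed

lemma ex_power_bracket:
  fixes L r :: real
  assumes "1 < L" "1 \<le> r"
  shows "\<exists>k. L ^ k \<le> r \<and> r < L ^ Suc k"
proof -
  obtain n where "r < L ^ n"
    using real_arch_pow[OF assms(1)] by blast
  then show ?thesis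
  proof (induction n)
    case (Suc n)
    show ?case
    proof (cases "r < L ^ n")
      case False
      with Suc.prems show ?thesis
        by (intro exI[of _ n] conjI) linarith+
    qed (rule Suc.IH)
  qed (use assms(2) in simp)
qed

lemma power_powr_log_ratio:
  fixes L :: real
  assumes "1 < L" "0 < n"
  shows "(L ^ k) powr (ln n / ln L) = n ^ k"
proof -
  have "(L ^ k) powr (ln n / ln L) = exp (real k * ln n)"
    using assms by (simp add: powr_def ln_realpow)
  also have "\<dots> = n ^ k"
    using assms(2) by (simp add: exp_of_nat_mult)
  finally show ?thesis .
qed

section \<open>The graph distance as a least chain length\<close>

lemma complex_chain_iff_linked_chain:
  assumes "0 < n"
  shows "complex_chain L N \<nu> K M n x y \<longleftrightarrow>
    (\<exists>Ds. length Ds = n \<and> set Ds \<subseteq> complexes L N \<nu> K M \<and> linked_chain Ds x y)"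
proof
  assume "complex_chain L N \<nu> K M n x y"
  then obtain D where D: "\<forall>l\<in>{1..n}. D l \<in> complexes L N \<nu> K M" "x \<in> D 1" "y \<in> D n"
    "\<forall>l\<in>{1..<n}. D l \<inter> D (Suc l) \<noteq> {}"
    unfolding complex_chain_def by blast
  define Ds where "Ds = map D [1..<Suc n]"
  have Ds_simps: "length Ds = n" "hd Ds = D 1" "last Ds = D n"
    using assms by (simp_all add: Ds_def hd_map last_map del: upt_Suc)
  have nth_Ds: "Ds ! i = D (Suc i)" if "i < n" for i
    using that by (simp add: Ds_def nth_map_upt del: upt_Suc)
  have "successively (\<lambda>A B. A \<inter> B \<noteq> {}) Ds"
    unfolding successively_conv_nth using D(4) by (auto simp: Ds_simps(1) nth_Ds)
  then have "linked_chain Ds x y"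
    using assms D(2,3) Ds_simps by (auto simp: linked_chain_def)
  moreover have "set Ds \<subseteq> complexes L N \<nu> K M"
    using D(1) by (auto simp: Ds_def)
  ultimately show "\<exists>Ds. length Ds = n \<and> set Ds \<subseteq> complexes L N \<nu> K M \<and> linked_chain Ds x y"
    using Ds_simps(1) by blast
next
  assume "\<exists>Ds. length Ds = n \<and> set Ds \<subseteq> complexes L N \<nu> K M \<and> linked_chain Ds x y"
  then obtain Ds where Ds: "length Ds = n" "set Ds \<subseteq> complexes L N \<nu> K M" "linked_chain Ds x y"
    by blast
  define D where "D l = Ds ! (l - 1)" for l
  have "\<forall>l\<in>{1..n}. D l \<in> complexes L N \<nu> K M"
    using Ds(1) by (auto simp: D_def intro!: subsetD[OF Ds(2)] nth_mem)
  moreover have "x \<in> D 1" "y \<in> D n"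
    using Ds(1,3) assms by (auto simp: D_def linked_chain_def hd_conv_nth last_conv_nth)
  moreover have "D l \<inter> D (Suc l) \<noteq> {}" if "l \<in> {1..<n}" for l
  proof -
    have "Suc (l - 1) < length Ds"
      using that Ds(1) by auto
    then have "Ds ! (l - 1) \<inter> Ds ! Suc (l - 1) \<noteq> {}"
      using Ds(3) unfolding linked_chain_def successively_conv_nth by blast
    then show ?thesis
      using that by (simp add: D_def)
  qed
  ultimately show "complex_chain L N \<nu> K M n x y"
    unfolding complex_chain_def by blast
qed

lemma dM_eq_Least_length:
  assumes "x \<noteq> y"
  shows "dM L N \<nu> K M x y =
    (LEAST n. \<exists>Ds. length Ds = n \<and> set Ds \<subseteq> complexes L N \<nu> K M \<and> linked_chain Ds x y)"
    (is "_ = (LEAST n. ?P n)")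
proof (cases "\<exists>D\<in>complexes L N \<nu> K M. x \<in> D \<and> y \<in> D")
  case True
  then obtain D where "D \<in> complexes L N \<nu> K M" "x \<in> D" "y \<in> D"
    by blast
  then have "?P 1"
    by (intro exI[of _ "[D]"]) (simp add: linked_chain_singleton)
  moreover have "1 \<le> n" if "?P n" for n
    using that by (auto simp: linked_chain_def Suc_le_eq)
  ultimately have "(LEAST n. ?P n) = 1"
    by (intro Least_equality)
  with assms True show ?thesis
    by (simp add: dM_def)
next
  case False
  have chain_iff: "1 < n \<and> complex_chain L N \<nu> K M n x y \<longleftrightarrow> ?P n" for n
  proof (cases "1 < n")
    case False
    have "\<not> ?P n"
    proof
      assume "?P n"
      then obtain Ds where Ds: "length Ds = n" "set Ds \<subseteq> complexes L N \<nu> K M" "linked_chain Ds x y"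
        by blast
      have "length Ds \<le> 1"
        using Ds(1) \<open>\<not> 1 < n\<close> by simp
      with Ds(3) obtain D where "Ds = [D]" "x \<in> D" "y \<in> D"
        by (rule linked_chain_length_le_1)
      with Ds(2) \<open>\<not> (\<exists>D\<in>_. x \<in> D \<and> y \<in> D)\<close> show False
        by simp
    qed
    with False show ?thesis
      by blast
  qed (simp add: complex_chain_iff_linked_chain)
  have "dM L N \<nu> K M x y = (LEAST n. 1 < n \<and> complex_chain L N \<nu> K M n x y)"
    unfolding dM_def using assms False by (simp only: if_False)
  also have "\<dots> = (LEAST n. ?P n)"
    by (simp only: chain_iff)
  finally show ?thesis .
qed

lemma dM_self [simp]: "dM L N \<nu> K M x x = 0"
  by (simp add: dM_def)

lemma dM_le_length:
  assumes "set Ds \<subseteq> complexes L N \<nu> K M" "linked_chain Ds x y"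
  shows "dM L N \<nu> K M x y \<le> length Ds"
proof (cases "x = y")
  case False
  show ?thesis
    unfolding dM_eq_Least_length[OF False] using assms by (intro Least_le) blast
qed simp

lemma dM_attained:
  assumes "x \<noteq> y" "set Ds \<subseteq> complexes L N \<nu> K M" "linked_chain Ds x y"
  obtains Ds' where "length Ds' = dM L N \<nu> K M x y" "set Ds' \<subseteq> complexes L N \<nu> K M"
    "linked_chain Ds' x y"
proof -
  let ?P = "\<lambda>n. \<exists>Ds. length Ds = n \<and> set Ds \<subseteq> complexes L N \<nu> K M \<and> linked_chain Ds x y"
  have "?P (length Ds)"
    using assms(2,3) by blast
  then have "?P (LEAST n. ?P n)"
    by (rule LeastI)
  then show ?thesis
    using that unfolding dM_eq_Least_length[OF assms(1)] by blast
qed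

lemma Psi_word_Nil [simp]: "Psi_word L \<nu> [] = id"
  by (simp add: Psi_word_def)

lemma Psi_word_Cons [simp]: "Psi_word L \<nu> (i # w) = Psi L \<nu> i \<circ> Psi_word L \<nu> w"
  by (simp add: Psi_word_def)

lemma Psi_word_append: "Psi_word L \<nu> (u @ v) = Psi_word L \<nu> u \<circ> Psi_word L \<nu> v"
  by (induction u) auto

lemma words_0: "words N 0 = {[]}"
  by (auto simp: words_def)

lemma words_Suc_iff: "w \<in> words N (Suc n) \<longleftrightarrow> (\<exists>i v. w = i # v \<and> i \<in> {1..N} \<and> v \<in> words N n)"
  by (cases w) (auto simp: words_def)

lemma Cons_mem_words: "i \<in> {1..N} \<Longrightarrow> v \<in> words N n \<Longrightarrow> i # v \<in> words N (Suc n)"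
  by (simp add: words_Suc_iff)

lemma append_mem_words: "u \<in> words N m \<Longrightarrow> v \<in> words N n \<Longrightarrow> u @ v \<in> words N (m + n)"
  by (auto simp: words_def)

lemma finite_words: "finite (words N n)"
  using finite_lists_length_eq[of "{1..N}" n] by (simp add: words_def conj_commute)

lemma card_words: "card (words N n) = N ^ n"
  using card_lists_length_eq[of "{1..N}" n] by (simp add: words_def conj_commute)

lemma Psi_word_zero: "Psi_word L \<nu> u 0 = (\<Sum>r<length u. (1 / L) ^ r *\<^sub>R \<nu> (u ! r))"
proof (induction u)
  case (Cons i u)
  have "Psi_word L \<nu> (i # u) 0 = (1 / L) *\<^sub>R Psi_word L \<nu> u 0 + \<nu> i"
    by (simp add: Psi_def)
  also have "\<dots> = (\<Sum>r<length u. (1 / L) ^ Suc r *\<^sub>R \<nu> (u ! r)) + \<nu> i"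
    unfolding Cons by (simp add: scaleR_sum_right)
  also have "\<dots> = (\<Sum>r<length (i # u). (1 / L) ^ r *\<^sub>R \<nu> ((i # u) ! r))"
    unfolding length_Cons sum.lessThan_Suc_shift by simp
  finally show ?case .
qed simp

lemma Psi_word_affine: "Psi_word L \<nu> u p = (1 / L) ^ length u *\<^sub>R p + Psi_word L \<nu> u 0"
  by (induction u) (auto simp: Psi_def algebra_simps)

lemma scaled_Psi_word_zero:
  fixes L :: real and J :: int
  assumes "0 < L"
  shows "L powr J *\<^sub>R Psi_word L \<nu> u 0 =
    (\<Sum>j\<in>{J - int (length u) + 1..J}. L powr j *\<^sub>R \<nu> (u ! nat (J - j)))"
proof -
  have "L powr J * (1 / L) ^ r = L powr (J - real r)" for r :: nat
    using assms by (simp add: powr_diff powr_realpow divide_inverse power_one_over power_inverse)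
  then have "L powr J *\<^sub>R Psi_word L \<nu> u 0 = (\<Sum>r<length u. L powr (J - real r) *\<^sub>R \<nu> (u ! r))"
    unfolding Psi_word_zero scaleR_sum_right by simp
  also have "\<dots> = (\<Sum>j\<in>{J - int (length u) + 1..J}. L powr j *\<^sub>R \<nu> (u ! nat (J - j)))"
  proof (rule sum.reindex_bij_witness[where i = "\<lambda>j. nat (J - j)" and j = "\<lambda>r. J - int r"])
    fix r
    assume "r \<in> {..<length u}"
    then show "nat (J - (J - int r)) = r" "J - int r \<in> {J - int (length u) + 1..J}"
      by auto
    show "L powr real_of_int (J - int r) *\<^sub>R \<nu> (u ! nat (J - (J - int r))) =
        L powr (real_of_int J - real r) *\<^sub>R \<nu> (u ! r)"
      by simp
  next
    fix j
    assume "j \<in> {J - int (length u) + 1..J}"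
    then show "J - int (nat (J - j)) = j" "nat (J - j) \<in> {..<length u}"
      by auto
  qed
  finally show ?thesis .
qed

section \<open>Nested fractals\<close>

text \<open>The axioms of a simple nested fractal that the estimate uses.  \<open>V0\<close> plays the role of the essential fixed
  points.\<close>

locale nested_fractal =
  fixes L :: real and N :: nat and \<nu> :: "nat \<Rightarrow> real ^ 2" and K V0 :: "(real ^ 2) set"
  assumes L_gt_1: "1 < L"
    and one_le_N: "1 \<le> N"
    and nu_1: "\<nu> 1 = 0"
    and compact_K: "compact K"
    and K_nonempty: "K \<noteq> {}"
    and K_self_similar: "K = (\<Union>i\<in>{1..N}. Psi L \<nu> i ` K)"
    and finite_V0: "finite V0"
    and V0_fixed: "\<And>a. a \<in> V0 \<Longrightarrow> \<exists>i\<in>{1..N}. Psi L \<nu> i a = a"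
    and cells_1_connected: "\<And>a b. a \<in> {1..N} \<Longrightarrow> b \<in> {1..N} \<Longrightarrow>
      \<exists>n c. c 0 = a \<and> c n = b \<and> (\<forall>l\<le>n. c l \<in> {1..N}) \<and>
        (\<forall>l<n. Psi L \<nu> (c l) ` K \<inter> Psi L \<nu> (c (Suc l)) ` K \<noteq> {})"
    and nesting: "\<And>n w w'. 1 \<le> n \<Longrightarrow> w \<in> words N n \<Longrightarrow> w' \<in> words N n \<Longrightarrow> w \<noteq> w' \<Longrightarrow>
      Psi_word L \<nu> w ` K \<inter> Psi_word L \<nu> w' ` K = Psi_word L \<nu> w ` V0 \<inter> Psi_word L \<nu> w' ` V0"
begin

abbreviation psi :: "nat \<Rightarrow> real ^ 2 \<Rightarrow> real ^ 2" where
  "psi \<equiv> Psi L \<nu>"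

abbreviation cell :: "nat list \<Rightarrow> (real ^ 2) set" where
  "cell w \<equiv> Psi_word L \<nu> w ` K"

lemma L_pos: "0 < L"
  using L_gt_1 by simp

lemma dist_psi: "dist (psi i a) (psi i b) = dist a b / L"
proof -
  have "dist (psi i a) (psi i b) = norm ((1 / L) *\<^sub>R (a - b))"
    by (simp add: Psi_def dist_norm algebra_simps)
  then show ?thesis
    using L_pos by (simp add: dist_norm divide_inverse_commute)
qed

lemma psi_eq_iff: "psi i a = psi i b \<longleftrightarrow> a = b"
  using dist_psi[of i a b] L_pos by (metis dist_eq_0_iff divide_eq_0_iff order_less_irrefl)

lemma inj_psi: "inj (psi i)"
  by (simp add: inj_def psi_eq_iff)

lemma dist_Psi_word: "dist (Psi_word L \<nu> w a) (Psi_word L \<nu> w b) = dist a b / L ^ length w"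
  by (induction w) (auto simp: dist_psi field_simps)

lemma compact_psi_image: "compact S \<Longrightarrow> compact (psi i ` S)"
  unfolding Psi_def by (intro compact_continuous_image continuous_intros)

lemma psi_image_subset: "i \<in> {1..N} \<Longrightarrow> psi i ` K \<subseteq> K"
  using K_self_similar by blast

lemma cell_subset: "set w \<subseteq> {1..N} \<Longrightarrow> cell w \<subseteq> K"
proof (induction w)
  case (Cons i w)
  then have "psi i ` cell w \<subseteq> psi i ` K"
    by (intro image_mono) simp
  with Cons.prems psi_image_subset[of i] show ?case
    by (simp add: image_comp)
qed simp

lemma cell_subset_words: "w \<in> words N n \<Longrightarrow> cell w \<subseteq> K"
  using cell_subset by (simp add: words_def)

lemma K_covered_by_cells: "x \<in> K \<Longrightarrow> \<exists>w\<in>words N n. x \<in> cell w"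
proof (induction n arbitrary: x)
  case 0
  then show ?case by (simp add: words_0)
next
  case (Suc n)
  then obtain i x' where "i \<in> {1..N}" "x' \<in> K" "x = psi i x'"
    using K_self_similar by blast
  moreover obtain w where "w \<in> words N n" "x' \<in> cell w"
    using Suc.IH[OF \<open>x' \<in> K\<close>] by blast
  ultimately show ?case
    by (intro bexI[of _ "i # w"]) (auto simp: Cons_mem_words)
qed

lemma shrink_mem_K: "p \<in> K \<Longrightarrow> (1 / L) ^ k *\<^sub>R p \<in> K"
proof (induction k)
  case (Suc k)
  \<comment> \<open>since \<open>\<nu> 1 = 0\<close>, the map \<open>psi 1\<close> is the homothety with ratio \<open>1/L\<close>\<close>
  then have "psi 1 ((1 / L) ^ k *\<^sub>R p) \<in> K"
    using psi_image_subset[of 1] one_le_N by auto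
  moreover have "\<nu> (Suc 0) = 0"
    using nu_1 by simp
  ultimately show ?case
    by (simp add: Psi_def)
qed simp

lemma fixed_point_mem_K:
  assumes "i \<in> {1..N}" "psi i a = a"
  shows "a \<in> K"
proof -
  obtain p where p: "p \<in> K"
    using K_nonempty by blast
  have "a \<in> closure K"
  proof (subst closure_approachable, intro allI impI)
    fix e :: real
    assume "e > 0"
    have "0 < e / (dist p a + 1)"
      using \<open>e > 0\<close> by (simp add: add_nonneg_pos)
    then obtain n where n: "(1 / L) ^ n < e / (dist p a + 1)"
      using real_arch_pow_inv[of "e / (dist p a + 1)" "1 / L"] L_gt_1 by auto
    let ?w = "replicate n i"
    have fixed: "Psi_word L \<nu> ?w a = a"
      using assms(2) by (induction n) auto
    have "set ?w \<subseteq> {1..N}"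
      using assms(1) by auto
    then have inK: "Psi_word L \<nu> ?w p \<in> K"
      using cell_subset p by blast
    have "dist (Psi_word L \<nu> ?w p) a = (1 / L) ^ n * dist p a"
      using dist_Psi_word[of ?w p a] fixed by (simp add: power_one_over)
    also have "\<dots> \<le> (1 / L) ^ n * (dist p a + 1)"
      using L_pos by simp
    also have "\<dots> < e"
      using n by (simp add: less_divide_eq add_nonneg_pos)
    finally show "\<exists>y\<in>K. dist y a < e"
      using inK by blast
  qed
  then show ?thesis
    using compact_K by (simp add: compact_imp_closed)
qed

lemma V0_subset_K: "V0 \<subseteq> K"
  using V0_fixed fixed_point_mem_K by blast

lemma V0_in_cell_1:
  assumes "a \<in> V0" "i \<in> {1..N}" "a \<in> psi i ` K"
  shows "a \<in> psi i ` V0"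
proof -
  obtain j where j: "j \<in> {1..N}" "psi j a = a"
    using V0_fixed[OF assms(1)] by blast
  show ?thesis
  proof (cases "i = j")
    case True
    with j assms(1) show ?thesis
      by (metis image_eqI)
  next
    case False
    have "[i] \<in> words N 1" "[j] \<in> words N 1"
      using assms(2) j(1) by (auto simp: words_def)
    moreover have "a \<in> psi j ` K"
      using j(2) V0_subset_K assms(1) by (metis image_eqI subsetD)
    then have "a \<in> cell [i] \<inter> cell [j]"
      using assms(3) by simp
    ultimately have "a \<in> Psi_word L \<nu> [i] ` V0"
      using nesting[of 1 "[i]" "[j]"] False by auto
    then show ?thesis
      by simp
  qed
qed

section \<open>Separation of disjoint cells\<close>

definition offset_lift :: "nat \<Rightarrow> nat \<Rightarrow> real ^ 2 \<Rightarrow> real ^ 2" where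
  "offset_lift i j e = L *\<^sub>R (\<nu> j + e - \<nu> i)"

lemma translate_psi: "e + psi j p = psi i (offset_lift i j e + p)"
  using L_pos by (simp add: Psi_def offset_lift_def algebra_simps)

lemma translate_psi_image: "(+) e ` psi j ` S = psi i ` (+) (offset_lift i j e) ` S"
  unfolding image_image by (simp only: translate_psi[of e j _ i])

lemma Psi_word_Cons_image: "Psi_word L \<nu> (i # w) ` S = psi i ` Psi_word L \<nu> w ` S"
  by (simp add: image_comp)

definition nested_shift :: "real ^ 2 \<Rightarrow> bool" where
  "nested_shift e \<longleftrightarrow> (\<forall>k. \<forall>t\<in>words N k. \<forall>t'\<in>words N k.
     cell t \<inter> (+) e ` cell t' \<subseteq> Psi_word L \<nu> t ` V0 \<inter> (+) e ` Psi_word L \<nu> t' ` V0)"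

lemma nested_shift_meet:
  assumes "nested_shift e" "q \<in> K" "q \<in> (+) e ` K"
  shows "q \<in> V0" "q - e \<in> V0"
proof -
  have "[] \<in> words N 0"
    by (simp add: words_0)
  with assms(1) have "K \<inter> (+) e ` K \<subseteq> V0 \<inter> (+) e ` V0"
    unfolding nested_shift_def by fastforce
  with assms(2,3) show "q \<in> V0" "q - e \<in> V0"
    by auto
qed

lemma nested_shift_offset_lift:
  assumes "\<And>k t t'. t \<in> words N k \<Longrightarrow> t' \<in> words N k \<Longrightarrow>
    cell (i # t) \<inter> (+) e ` cell (j # t') \<subseteq>
    Psi_word L \<nu> (i # t) ` V0 \<inter> (+) e ` Psi_word L \<nu> (j # t') ` V0"
  shows "nested_shift (offset_lift i j e)"
  unfolding nested_shift_def
proof (intro allI ballI)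
  fix k t t'
  assume "t \<in> words N k" "t' \<in> words N k"
  from assms[OF this] have "psi i ` (cell t \<inter> (+) (offset_lift i j e) ` cell t') \<subseteq>
      psi i ` (Psi_word L \<nu> t ` V0 \<inter> (+) (offset_lift i j e) ` Psi_word L \<nu> t' ` V0)"
    by (simp only: Psi_word_Cons_image translate_psi_image[of e j _ i] image_Int[OF inj_psi])
  then show "cell t \<inter> (+) (offset_lift i j e) ` cell t' \<subseteq>
      Psi_word L \<nu> t ` V0 \<inter> (+) (offset_lift i j e) ` Psi_word L \<nu> t' ` V0"
    by (simp add: inj_image_subset_iff[OF inj_psi])
qed

lemma nested_shift_distinct_letters:
  assumes "i \<in> {1..N}" "j \<in> {1..N}" "i \<noteq> j"
  shows "nested_shift (offset_lift i j 0)"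
proof (rule nested_shift_offset_lift)
  fix k t t'
  assume "t \<in> words N k" "t' \<in> words N k"
  then have "i # t \<in> words N (Suc k)" "j # t' \<in> words N (Suc k)"
    using assms by (simp_all add: Cons_mem_words)
  with nesting[OF _ this] assms(3)
  show "cell (i # t) \<inter> (+) 0 ` cell (j # t') \<subseteq>
      Psi_word L \<nu> (i # t) ` V0 \<inter> (+) 0 ` Psi_word L \<nu> (j # t') ` V0"
    by simp
qed

lemma nested_shift_lift:
  assumes "nested_shift e" "i \<in> {1..N}" "j \<in> {1..N}"
  shows "nested_shift (offset_lift i j e)"
proof (rule nested_shift_offset_lift)
  fix k t t'
  assume "t \<in> words N k" "t' \<in> words N k"
  then have "i # t \<in> words N (Suc k)" "j # t' \<in> words N (Suc k)"
    using assms by (simp_all add: Cons_mem_words)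
  with assms(1) show "cell (i # t) \<inter> (+) e ` cell (j # t') \<subseteq>
      Psi_word L \<nu> (i # t) ` V0 \<inter> (+) e ` Psi_word L \<nu> (j # t') ` V0"
    unfolding nested_shift_def by blast
qed

definition offsets :: "(real ^ 2) set" where
  "offsets = (\<lambda>(i, j). offset_lift i j 0) ` ({1..N} \<times> {1..N}) \<union> (\<lambda>(a, b). a - b) ` (V0 \<times> V0)"

lemma finite_offsets: "finite offsets"
  using finite_V0 by (simp add: offsets_def)

definition K_away :: "real \<Rightarrow> real ^ 2 \<Rightarrow> (real ^ 2) set" where
  "K_away r e = K - (\<Union>q\<in>K \<inter> (+) e ` K. ball q r)"

lemma exists_radius_V0_near_cell_1:
  "\<exists>\<rho>>0. \<forall>a\<in>V0. \<forall>i\<in>{1..N}. \<forall>z\<in>psi i ` K. dist a z < \<rho> \<longrightarrow> a \<in> psi i ` K"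
proof (rule eventually_at_right_0_imp_pos)
  show "\<forall>\<^sub>F \<rho> in at_right 0. \<forall>a\<in>V0. \<forall>i\<in>{1..N}. \<forall>z\<in>psi i ` K. dist a z < \<rho> \<longrightarrow> a \<in> psi i ` K"
    using finite_V0 compact_K
    by (intro eventually_ball_finite ballI eventually_near_closed_imp_mem
        compact_imp_closed compact_psi_image) auto
qed

lemma exists_dist_K_away:
  assumes "0 < r"
  shows "\<exists>\<eta>>0. \<forall>e\<in>offsets. \<forall>x\<in>K_away r e. \<forall>y\<in>(+) e ` K. \<eta> \<le> dist x y"
proof (rule eventually_at_right_0_imp_pos)
  have "\<forall>\<^sub>F \<eta> in at_right 0. \<forall>x\<in>K_away r e. \<forall>y\<in>(+) e ` K. \<eta> \<le> dist x y" for e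
  proof (rule eventually_le_dist_compact_closed)
    show "compact (K_away r e)"
      unfolding K_away_def using compact_K by (intro compact_diff open_UN ballI open_ball)
    show "closed ((+) e ` K)"
      using compact_K by (intro compact_imp_closed compact_translation)
    show "K_away r e \<inter> (+) e ` K = {}"
      unfolding K_away_def using assms by force
  qed
  then show "\<forall>\<^sub>F \<eta> in at_right 0. \<forall>e\<in>offsets. \<forall>x\<in>K_away r e. \<forall>y\<in>(+) e ` K. \<eta> \<le> dist x y"
    by (intro eventually_ball_finite finite_offsets) auto
qed

lemma dist_psi_lower_bound:
  assumes "c / L ^ k \<le> dist a b"
  shows "c / L ^ Suc k \<le> dist (psi i a) (psi i b)"
proof -
  have "c / L ^ Suc k = (c / L ^ k) / L"
    by (simp add: mult.commute)
  also have "\<dots> \<le> dist a b / L"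
    using L_pos by (intro divide_right_mono assms) simp
  finally show ?thesis
    by (simp add: dist_psi)
qed

lemma translated_cells_Cons_pullback:
  assumes "cell (i # s) \<inter> (+) e ` cell (j # s') = {}" "x \<in> cell (i # s)" "y \<in> (+) e ` cell (j # s')"
  obtains x' y' where "x' \<in> cell s" "y' \<in> (+) (offset_lift i j e) ` cell s'"
    and "cell s \<inter> (+) (offset_lift i j e) ` cell s' = {}" and "x = psi i x'" "y = psi i y'"
proof -
  have cell_i: "cell (i # s) = psi i ` cell s"
    by (simp only: Psi_word_Cons_image)
  have cell_j: "(+) e ` cell (j # s') = psi i ` (+) (offset_lift i j e) ` cell s'"
    unfolding Psi_word_Cons_image by (rule translate_psi_image)
  obtain x' where "x' \<in> cell s" "x = psi i x'"
    using assms(2) unfolding cell_i by (rule imageE)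
  moreover obtain y' where "y' \<in> (+) (offset_lift i j e) ` cell s'" "y = psi i y'"
    using assms(3) unfolding cell_j by (rule imageE)
  moreover have "psi i ` (cell s \<inter> (+) (offset_lift i j e) ` cell s') = {}"
    using assms(1) unfolding cell_i cell_j image_Int[OF inj_psi] .
  ultimately show thesis
    using that by blast
qed

definition cells_separated_by :: "real \<Rightarrow> bool" where
  "cells_separated_by c \<longleftrightarrow> (\<forall>n. \<forall>w\<in>words N n. \<forall>w'\<in>words N n.
     cell w \<inter> cell w' = {} \<longrightarrow> (\<forall>x\<in>cell w. \<forall>y\<in>cell w'. c / L ^ n \<le> dist x y))"

context
  fixes \<rho> \<eta> c :: real
  assumes V0_near_cell_1: "\<forall>a\<in>V0. \<forall>i\<in>{1..N}. \<forall>z\<in>psi i ` K. dist a z < \<rho> \<longrightarrow> a \<in> psi i ` K"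
    and K_away_far: "\<forall>e\<in>offsets. \<forall>x\<in>K_away (\<rho> / 2) e. \<forall>y\<in>(+) e ` K. \<eta> \<le> dist x y"
    and c_pos: "0 < c" and c_le: "c \<le> \<rho> / 2" "c \<le> \<eta>"
begin

lemma offset_lift_mem_offsets:
  assumes "nested_shift e" "i \<in> {1..N}" "j \<in> {1..N}" "x \<in> psi i ` K" "y \<in> (+) e ` psi j ` K"
    and "x \<notin> K_away (\<rho> / 2) e" "dist x y < \<rho> / 2"
  shows "offset_lift i j e \<in> offsets"
proof -
  have "x \<in> K"
    using assms(2,4) psi_image_subset by blast
  with assms(6) obtain q where q: "q \<in> K" "q \<in> (+) e ` K" "dist q x < \<rho> / 2"
    by (auto simp: K_away_def)
  then have "dist q x < \<rho>" "dist q y < \<rho>"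
    using assms(7) dist_triangle[of q y x] zero_le_dist[of q x] by linarith+
  have V0: "q \<in> V0" "q - e \<in> V0"
    using nested_shift_meet assms(1) q(1,2) by auto
  have "q \<in> psi i ` K"
    using V0_near_cell_1 V0(1) assms(2,4) \<open>dist q x < \<rho>\<close> by blast
  then obtain a where a: "a \<in> V0" "q = psi i a"
    using V0_in_cell_1[OF V0(1) assms(2)] by blast
  have "dist (q - e) (y - e) < \<rho>"
    using \<open>dist q y < \<rho>\<close> by (simp add: dist_norm)
  moreover have "y - e \<in> psi j ` K"
    using assms(5) by auto
  ultimately have "q - e \<in> psi j ` K"
    using V0_near_cell_1 V0(2) assms(3) by blast
  then obtain b where b: "b \<in> V0" "q - e = psi j b"
    using V0_in_cell_1[OF V0(2) assms(3)] by blast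
  have "psi i a = psi i (offset_lift i j e + b)"
    using a(2) b(2) translate_psi[of e j b i] by (metis add.commute diff_add_cancel)
  then have "offset_lift i j e = a - b"
    by (simp add: psi_eq_iff)
  with a(1) b(1) show ?thesis
    by (auto simp: offsets_def)
qed

text \<open>Either \<open>x\<close> stays away from \<open>K \<inter> (e + K)\<close>, and the compactness bound \<open>\<eta>\<close> applies,
  or \<open>x\<close> and \<open>y\<close> are both close to a point of \<open>V0 \<inter> (e + V0)\<close>; that point then lies in the
  first-level cells containing \<open>x\<close> and \<open>y\<close>, and pulling back through \<open>psi i\<close> yields a pair of the
  same kind one level lower, with an offset again in the finite set \<open>offsets\<close>.\<close>

lemma shifted_cells_separated:
  assumes "e \<in> offsets" "nested_shift e" "t \<in> words N k" "t' \<in> words N k"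
    and "cell t \<inter> (+) e ` cell t' = {}" "x \<in> cell t" "y \<in> (+) e ` cell t'"
  shows "c / L ^ k \<le> dist x y"
  using assms
proof (induction k arbitrary: e t t' x y)
  case 0
  then have "x \<in> K_away (\<rho> / 2) e" "y \<in> (+) e ` K"
    by (auto simp: words_0 K_away_def)
  with K_away_far \<open>e \<in> offsets\<close> have "\<eta> \<le> dist x y"
    by blast
  with c_le(2) show ?case
    by simp
next
  case (Suc k)
  then obtain i s j s' where t: "t = i # s" "i \<in> {1..N}" "s \<in> words N k"
    and t': "t' = j # s'" "j \<in> {1..N}" "s' \<in> words N k"
    unfolding words_Suc_iff by blast
  define e' where "e' = offset_lift i j e"
  obtain x' y' where x': "x' \<in> cell s" "x = psi i x'" and y': "y' \<in> (+) e' ` cell s'" "y = psi i y'"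
    and disjoint: "cell s \<inter> (+) e' ` cell s' = {}"
    using translated_cells_Cons_pullback Suc.prems(5-7) unfolding t(1) t'(1) e'_def by metis
  have x_mem: "x \<in> psi i ` K"
    using x' cell_subset_words[OF t(3)] by blast
  have "cell t' \<subseteq> psi j ` K"
    unfolding t'(1) Psi_word_Cons_image using cell_subset_words[OF t'(3)] by (rule image_mono)
  then have y_mem: "y \<in> (+) e ` psi j ` K"
    using Suc.prems(7) by blast
  show ?case
  proof (rule ccontr)
    assume far: "\<not> c / L ^ Suc k \<le> dist x y"
    have "c / L ^ Suc k \<le> c"
      using c_pos L_gt_1 divide_left_mono[of 1 "L ^ Suc k" c] one_le_power[of L "Suc k"] by simp
    with far c_le have close: "dist x y < \<rho> / 2" "dist x y < \<eta>"
      by linarith+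
    have "y \<in> (+) e ` K"
      using y_mem psi_image_subset[OF t'(2)] by blast
    with K_away_far \<open>e \<in> offsets\<close> close(2) have "x \<notin> K_away (\<rho> / 2) e"
      by force
    with close(1) have "e' \<in> offsets"
      unfolding e'_def by (intro offset_lift_mem_offsets[OF Suc.prems(2) t(2) t'(2) x_mem y_mem])
    moreover have "nested_shift e'"
      unfolding e'_def by (rule nested_shift_lift[OF Suc.prems(2) t(2) t'(2)])
    ultimately have "c / L ^ k \<le> dist x' y'"
      using Suc.IH[OF _ _ t(3) t'(3) disjoint x'(1) y'(1)] by blast
    then have "c / L ^ Suc k \<le> dist x y"
      unfolding x'(2) y'(2) by (rule dist_psi_lower_bound)
    with far show False ..
  qed
qed

lemma cells_separated_by_small_c: "cells_separated_by c"
proof -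
  have "c / L ^ n \<le> dist x y"
    if "w \<in> words N n" "w' \<in> words N n" "cell w \<inter> cell w' = {}" "x \<in> cell w" "y \<in> cell w'"
    for n w w' x y
    using that
  proof (induction n arbitrary: w w' x y)
    case 0
    then show ?case
      using K_nonempty by (simp add: words_0)
  next
    case (Suc n)
    then obtain i v j v' where w: "w = i # v" "i \<in> {1..N}" "v \<in> words N n"
      and w': "w' = j # v'" "j \<in> {1..N}" "v' \<in> words N n"
      unfolding words_Suc_iff by blast
    define e where "e = offset_lift i j 0"
    \<comment> \<open>viewing \<open>cell w'\<close> as its translate by \<open>0\<close>, the pull-back covers \<open>i = j\<close>
      (where \<open>e = 0\<close>) and \<open>i \<noteq> j\<close> alike\<close>
    have "cell w \<inter> (+) 0 ` cell w' = {}" "y \<in> (+) 0 ` cell w'"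
      using Suc.prems(3,5) by simp_all
    then obtain x' y' where x': "x' \<in> cell v" "x = psi i x'" and y': "y' \<in> (+) e ` cell v'" "y = psi i y'"
      and disjoint: "cell v \<inter> (+) e ` cell v' = {}"
      using translated_cells_Cons_pullback Suc.prems(4) unfolding w(1) w'(1) e_def by metis
    have "c / L ^ n \<le> dist x' y'"
    proof (cases "i = j")
      case True
      then have "e = 0"
        by (simp add: e_def offset_lift_def)
      with Suc.IH[OF w(3) w'(3) _ x'(1)] disjoint y'(1) show ?thesis
        by simp
    next
      case False
      have "e \<in> offsets"
        using w(2) w'(2) by (auto simp: e_def offsets_def)
      moreover have "nested_shift e"
        unfolding e_def using w(2) w'(2) False by (rule nested_shift_distinct_letters)
      ultimately show ?thesis
        using shifted_cells_separated[OF _ _ w(3) w'(3) disjoint x'(1) y'(1)] by blast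
    qed
    then show ?case
      unfolding x'(2) y'(2) by (rule dist_psi_lower_bound)
  qed
  then show ?thesis
    unfolding cells_separated_by_def by blast
qed

end

lemma cells_separated_by_exists: "\<exists>c>0. cells_separated_by c"
proof -
  obtain \<rho> where \<rho>: "0 < \<rho>" "\<forall>a\<in>V0. \<forall>i\<in>{1..N}. \<forall>z\<in>psi i ` K. dist a z < \<rho> \<longrightarrow> a \<in> psi i ` K"
    using exists_radius_V0_near_cell_1 by blast
  obtain \<eta> where \<eta>: "0 < \<eta>" "\<forall>e\<in>offsets. \<forall>x\<in>K_away (\<rho> / 2) e. \<forall>y\<in>(+) e ` K. \<eta> \<le> dist x y"
    using exists_dist_K_away[of "\<rho> / 2"] \<rho>(1) by auto
  have "0 < min (\<rho> / 2) \<eta>"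
    using \<rho>(1) \<eta>(1) by simp
  moreover have "cells_separated_by (min (\<rho> / 2) \<eta>)"
    by (rule cells_separated_by_small_c[OF \<rho>(2) \<eta>(2)]) (use \<rho>(1) \<eta>(1) in auto)
  ultimately show ?thesis
    by blast
qed

section \<open>Chains of cells and of \<open>M\<close>-complexes\<close>

lemma Psi_word_image_cell_chain:
  assumes "linked_chain Ds x y" "set Ds \<subseteq> cell ` words N k" "w \<in> words N n"
  shows "linked_chain (map ((`) (Psi_word L \<nu> w)) Ds) (Psi_word L \<nu> w x) (Psi_word L \<nu> w y)"
    and "set (map ((`) (Psi_word L \<nu> w)) Ds) \<subseteq> cell ` words N (n + k)"
proof -
  show "linked_chain (map ((`) (Psi_word L \<nu> w)) Ds) (Psi_word L \<nu> w x) (Psi_word L \<nu> w y)"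
    using assms(1) by (rule linked_chain_image)
  have "Psi_word L \<nu> w ` cell u \<in> cell ` words N (n + k)" if "u \<in> words N k" for u
  proof -
    have "Psi_word L \<nu> w ` cell u = cell (w @ u)"
      by (simp add: Psi_word_append image_comp)
    then show ?thesis
      using append_mem_words[OF assms(3) that] by simp
  qed
  with assms(2) show "set (map ((`) (Psi_word L \<nu> w)) Ds) \<subseteq> cell ` words N (n + k)"
    by auto
qed

lemma cell_chain_exists:
  assumes "x \<in> K" "y \<in> K"
  shows "\<exists>Ds. linked_chain Ds x y \<and> set Ds \<subseteq> cell ` words N n"
  using assms
proof (induction n arbitrary: x y)
  case 0
  then show ?case
    by (intro exI[of _ "[K]"]) (simp add: linked_chain_singleton words_0)
next
  case (Suc n)
  let ?joined = "\<lambda>p q. \<exists>Ds. linked_chain Ds p q \<and> set Ds \<subseteq> cell ` words N (Suc n)"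
  have within: "?joined p q" if a: "a \<in> {1..N}" and "p \<in> psi a ` K" "q \<in> psi a ` K" for a p q
  proof -
    obtain p' q' where pq: "p' \<in> K" "q' \<in> K" "p = psi a p'" "q = psi a q'"
      using \<open>p \<in> psi a ` K\<close> \<open>q \<in> psi a ` K\<close> by blast
    then obtain Ds where "linked_chain Ds p' q'" "set Ds \<subseteq> cell ` words N n"
      using Suc.IH by blast
    moreover have "[a] \<in> words N 1"
      using a by (simp add: words_def)
    ultimately show ?thesis
      using Psi_word_image_cell_chain pq(3,4) by fastforce
  qed
  have trans: "?joined p r" if "?joined p q" "?joined q r" for p q r
    using that linked_chain_append by fastforce
  obtain a b where ab: "a \<in> {1..N}" "x \<in> psi a ` K" "b \<in> {1..N}" "y \<in> psi b ` K"
    using Suc.prems K_self_similar by blast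
  then obtain m c where c: "c 0 = a" "c m = b" "\<forall>l\<le>m. c l \<in> {1..N}"
    "\<forall>l<m. psi (c l) ` K \<inter> psi (c (Suc l)) ` K \<noteq> {}"
    using cells_1_connected by blast
  show ?case
    by (rule chain_of_sets_connects[where A = "\<lambda>l. psi (c l) ` K" and m = m])
      (use trans within c ab in auto)
qed

lemma short_cell_chain_exists:
  assumes "x \<in> K" "y \<in> K"
  shows "\<exists>Ds. linked_chain Ds x y \<and> set Ds \<subseteq> cell ` words N n \<and> length Ds \<le> N ^ n"
proof -
  obtain Ds where "linked_chain Ds x y" "set Ds \<subseteq> cell ` words N n"
    using cell_chain_exists[OF assms] by blast
  moreover have "card (cell ` words N n) \<le> N ^ n"
    using card_image_le[OF finite_words] by (metis card_words)
  ultimately show ?thesis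
    using linked_chain_shorten[of Ds x y "cell ` words N n"] finite_words
    by (meson finite_imageI order_trans)
qed

lemma close_points_cell_chain:
  assumes "cells_separated_by c" "x \<in> K" "y \<in> K" "dist x y < c / L ^ n"
  shows "\<exists>Ds. linked_chain Ds x y \<and> set Ds \<subseteq> cell ` words N (n + k) \<and> length Ds \<le> 2 * N ^ k"
proof -
  obtain w w' where w: "w \<in> words N n" "x \<in> cell w" and w': "w' \<in> words N n" "y \<in> cell w'"
    using K_covered_by_cells assms(2,3) by meson
  have "cell w \<inter> cell w' \<noteq> {}"
    using assms(1,4) w w' unfolding cells_separated_by_def by force
  then obtain z where "z \<in> cell w" "z \<in> cell w'"
    by blast
  with w w' obtain x' y' z1 z2 where pts: "x' \<in> K" "y' \<in> K" "z1 \<in> K" "z2 \<in> K"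
    "x = Psi_word L \<nu> w x'" "y = Psi_word L \<nu> w' y'" "z = Psi_word L \<nu> w z1" "z = Psi_word L \<nu> w' z2"
    by blast
  obtain As where As: "linked_chain As x' z1" "set As \<subseteq> cell ` words N k" "length As \<le> N ^ k"
    using short_cell_chain_exists pts(1,3) by blast
  obtain Bs where Bs: "linked_chain Bs z2 y'" "set Bs \<subseteq> cell ` words N k" "length Bs \<le> N ^ k"
    using short_cell_chain_exists pts(4,2) by blast
  let ?Ds = "map ((`) (Psi_word L \<nu> w)) As @ map ((`) (Psi_word L \<nu> w')) Bs"
  have "linked_chain (map ((`) (Psi_word L \<nu> w)) As) x z"
    using Psi_word_image_cell_chain(1)[OF As(1,2) w(1)] by (simp only: pts(5,7))
  moreover have "linked_chain (map ((`) (Psi_word L \<nu> w')) Bs) z y"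
    using Psi_word_image_cell_chain(1)[OF Bs(1,2) w'(1)] by (simp only: pts(6,8))
  ultimately have "linked_chain ?Ds x y"
    by (rule linked_chain_append)
  moreover have "set ?Ds \<subseteq> cell ` words N (n + k)"
    using Psi_word_image_cell_chain(2)[OF As(1,2) w(1)] Psi_word_image_cell_chain(2)[OF Bs(1,2) w'(1)]
    by auto
  moreover have "length ?Ds \<le> 2 * N ^ k"
    using As(3) Bs(3) by simp
  ultimately show ?thesis
    by blast
qed

lemma scaled_cell_mem_complexes:
  fixes J M :: int
  assumes "M + 1 \<le> J" "u \<in> words N (nat (J - M))"
  shows "(*\<^sub>R) (L powr J) ` cell u \<in> complexes L N \<nu> K M"
proof -
  define n where "n = nat (J - M)"
  have lu: "length u = n" and su: "set u \<subseteq> {1..N}"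
    using assms(2) unfolding n_def words_def by auto
  define i where "i j = u ! nat (J - j)" for j :: int
  define S where "S = (\<Sum>j\<in>{M+1..J}. (L powr real_of_int j) *\<^sub>R \<nu> (i j))"
  have shift: "L powr J *\<^sub>R Psi_word L \<nu> u 0 = S"
    using scaled_Psi_word_zero[OF L_pos, of J \<nu> u] assms(1) by (simp add: lu n_def S_def i_def)
  have "(1 / L) ^ n = L powr (- real n)"
    using L_pos by (simp add: powr_minus powr_realpow power_one_over inverse_eq_divide)
  then have scale: "L powr J * (1 / L) ^ n = L powr M"
    using assms(1) by (simp add: n_def powr_add[symmetric])
  have "(*\<^sub>R) (L powr J) ` cell u = (\<lambda>x. x + S) ` Kscaled L K M"
    unfolding Kscaled_def image_image
  proof (rule image_cong[OF refl])
    fix p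
    show "L powr J *\<^sub>R Psi_word L \<nu> u p = L powr M *\<^sub>R p + S"
      by (subst Psi_word_affine) (simp add: lu scaleR_add_right scale shift)
  qed
  moreover have "i j \<in> {1..N}" if "j \<in> {M+1..J}" for j
  proof -
    have "nat (J - j) < length u"
      using that lu n_def by auto
    then show ?thesis
      unfolding i_def using su nth_mem by blast
  qed
  ultimately show ?thesis
    unfolding complexes_def S_def using assms(1) by blast
qed

lemma dist_le_in_complex:
  assumes "D \<in> complexes L N \<nu> K M" "a \<in> D" "b \<in> D"
  shows "dist a b \<le> L powr M * diameter K"
proof -
  obtain S where "D = (\<lambda>x. x + S) ` Kscaled L K M"
    using assms(1) unfolding complexes_def by blast
  with assms(2,3) obtain a' b' where "a' \<in> K" "b' \<in> K"
    "a = L powr M *\<^sub>R a' + S" "b = L powr M *\<^sub>R b' + S"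
    unfolding Kscaled_def by auto
  then have "dist a b = L powr M * dist a' b'"
    by (simp add: dist_norm flip: scaleR_diff_right)
  also have "\<dots> \<le> L powr M * diameter K"
    using diameter_bounded_bound[OF compact_imp_bounded[OF compact_K] \<open>a' \<in> K\<close> \<open>b' \<in> K\<close>]
    by (simp add: mult_left_mono)
  finally show ?thesis .
qed

lemma Kinf_eventually_rescaled_mem_K:
  assumes "x \<in> Kinf L K"
  shows "\<forall>\<^sub>F J in at_top. L powr (- real_of_int J) *\<^sub>R x \<in> K"
proof -
  obtain M0 :: nat and p where p: "p \<in> K" "x = L powr M0 *\<^sub>R p"
    using assms unfolding Kinf_def Kscaled_def by auto
  have "L powr (- real_of_int J) *\<^sub>R x \<in> K" if "int M0 \<le> J" for J
  proof -
    have "L powr (- real_of_int J) * L powr M0 = L powr (- real (nat (J - M0)))"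
      using that by (simp add: powr_add[symmetric])
    also have "\<dots> = (1 / L) ^ nat (J - M0)"
      using L_pos by (simp add: powr_minus powr_realpow power_one_over inverse_eq_divide)
    finally show ?thesis
      using shrink_mem_K[OF p(1)] by (simp add: p(2))
  qed
  then show ?thesis
    unfolding eventually_at_top_linorder by blast
qed

lemma close_points_complex_chain:
  assumes "cells_separated_by c" "M \<le> m" "x \<in> Kinf L K" "y \<in> Kinf L K"
    and "dist x y < c * L powr m"
  shows "\<exists>Ds. linked_chain Ds x y \<and> set Ds \<subseteq> complexes L N \<nu> K M \<and> length Ds \<le> 2 * N ^ nat (m - M)"
proof -
  have "\<forall>\<^sub>F J in at_top.
      m + 1 \<le> J \<and> L powr (- real_of_int J) *\<^sub>R x \<in> K \<and> L powr (- real_of_int J) *\<^sub>R y \<in> K"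
    using assms(3,4) by (intro eventually_conj eventually_ge_at_top Kinf_eventually_rescaled_mem_K)
  then obtain J where J: "m + 1 \<le> J" and XY: "L powr (- real_of_int J) *\<^sub>R x \<in> K" "L powr (- real_of_int J) *\<^sub>R y \<in> K"
    unfolding eventually_at_top_linorder by blast
  define h :: "real ^ 2 \<Rightarrow> real ^ 2" where "h = (*\<^sub>R) (L powr J)"
  define n where "n = nat (J - m)"
  define k where "k = nat (m - M)"
  have "dist (L powr (- real_of_int J) *\<^sub>R x) (L powr (- real_of_int J) *\<^sub>R y) = L powr (- real_of_int J) * dist x y"
    by (simp add: dist_norm flip: scaleR_diff_right)
  also have "\<dots> < L powr (- real_of_int J) * (c * L powr m)"
    using L_pos by (intro mult_strict_left_mono assms(5)) simp
  also have "\<dots> = c * L powr (- real n)"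
    using J by (simp add: n_def powr_add[symmetric] mult_ac)
  also have "\<dots> = c / L ^ n"
    using L_pos by (simp add: powr_minus_divide powr_realpow)
  finally obtain Ds where Ds: "linked_chain Ds (L powr (- real_of_int J) *\<^sub>R x) (L powr (- real_of_int J) *\<^sub>R y)"
    "set Ds \<subseteq> cell ` words N (n + k)" "length Ds \<le> 2 * N ^ k"
    using close_points_cell_chain[OF assms(1) XY] by blast
  have inverse_scale: "L powr J * L powr (- real_of_int J) = 1"
    using L_pos by (simp add: powr_add[symmetric])
  have "h (L powr (- real_of_int J) *\<^sub>R z) = z" for z
    by (simp only: h_def scaleR_scaleR inverse_scale scaleR_one)
  then have "linked_chain (map ((`) h) Ds) x y"
    using linked_chain_image[OF Ds(1), of h] by simp
  moreover have "set (map ((`) h) Ds) \<subseteq> complexes L N \<nu> K M"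
  proof -
    have "n + k = nat (J - M)"
      using J assms(2) by (simp add: n_def k_def)
    then show ?thesis
      using Ds(2) J assms(2) by (auto simp: h_def intro!: scaled_cell_mem_complexes)
  qed
  ultimately show ?thesis
    using Ds(3) unfolding k_def by (intro exI[of _ "map ((`) h) Ds"]) simp
qed

lemma complex_chain_exists:
  assumes "0 < c" "cells_separated_by c" "x \<in> Kinf L K" "y \<in> Kinf L K"
  shows "\<exists>Ds. linked_chain Ds x y \<and> set Ds \<subseteq> complexes L N \<nu> K M"
proof -
  obtain n where "dist x y / (c * L powr M) < L ^ n"
    using real_arch_pow[OF L_gt_1] by blast
  then have "dist x y < c * L powr (M + int n)"
    using assms(1) L_pos by (simp add: divide_less_eq powr_add powr_realpow mult_ac)
  then show ?thesis
    using close_points_complex_chain[OF assms(2) _ assms(3,4), of M "M + int n"] by auto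
qed

lemma dM_lower_bound:
  "\<exists>C6>0. \<forall>x\<in>Kinf L K. \<forall>y\<in>Kinf L K. C6 * norm (x - y) \<le> real (dM L N \<nu> K M x y)"
proof -
  obtain c where c: "0 < c" "cells_separated_by c"
    using cells_separated_by_exists by blast
  define B where "B = L powr M * (diameter K + 1)"
  have B_pos: "0 < B"
    using L_pos diameter_ge_0[OF compact_imp_bounded[OF compact_K]] by (simp add: B_def add_nonneg_pos)
  have "norm (x - y) \<le> real (dM L N \<nu> K M x y) * B" if xy: "x \<in> Kinf L K" "y \<in> Kinf L K" for x y
  proof (cases "x = y")
    case False
    obtain Ds where "linked_chain Ds x y" "set Ds \<subseteq> complexes L N \<nu> K M"
      using complex_chain_exists[OF c xy] by blast
    then obtain Ds' where Ds': "length Ds' = dM L N \<nu> K M x y" "set Ds' \<subseteq> complexes L N \<nu> K M"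
      "linked_chain Ds' x y"
      using dM_attained[OF False] by blast
    have "L powr M * diameter K \<le> B"
      unfolding B_def by (intro mult_left_mono) auto
    then have "dist a b \<le> B" if "D \<in> set Ds'" "a \<in> D" "b \<in> D" for D a b
      using dist_le_in_complex[of D M a b] that Ds'(2) by force
    then show ?thesis
      using linked_chain_dist_le[OF Ds'(3)] Ds'(1) by (simp add: dist_norm)
  qed simp
  then have "norm (x - y) / B \<le> real (dM L N \<nu> K M x y)" if "x \<in> Kinf L K" "y \<in> Kinf L K" for x y
    using that B_pos by (simp add: divide_le_eq)
  with B_pos show ?thesis
    by (intro exI[of _ "1 / B"]) auto
qed

lemma dM_le_close:
  assumes "cells_separated_by c" "x \<in> Kinf L K" "y \<in> Kinf L K" "dist x y < c * L powr (M + int k)"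
  shows "dM L N \<nu> K M x y \<le> 2 * N ^ k"
proof -
  have "M \<le> M + int k" "nat (M + int k - M) = k"
    by simp_all
  with close_points_complex_chain[OF assms(1) _ assms(2,3), of M] assms(4)
  obtain Ds where "linked_chain Ds x y" "set Ds \<subseteq> complexes L N \<nu> K M" "length Ds \<le> 2 * N ^ k"
    by metis
  then show ?thesis
    using dM_le_length order_trans by blast
qed

lemma dM_upper_bound:
  "\<exists>C7>0. \<forall>x\<in>Kinf L K. \<forall>y\<in>Kinf L K.
     real (dM L N \<nu> K M x y) \<le> max 2 (C7 * norm (x - y) powr (ln (real N) / ln L))"
proof -
  obtain c where c: "0 < c" "cells_separated_by c"
    using cells_separated_by_exists by blast
  define d where "d = ln (real N) / ln L"
  define cM where "cM = c * L powr M"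
  define C7 where "C7 = 2 * real N / cM powr d"
  have cM_pos: "0 < cM"
    using c(1) L_pos by (simp add: cM_def)
  have "real (dM L N \<nu> K M x y) \<le> max 2 (C7 * norm (x - y) powr d)"
    if xy: "x \<in> Kinf L K" "y \<in> Kinf L K" for x y
  proof (cases "dist x y < cM")
    case True
    then have "dM L N \<nu> K M x y \<le> 2 * N ^ 0"
      using dM_le_close[OF c(2) xy, of M 0] by (simp add: cM_def)
    then show ?thesis
      by simp
  next
    case False
    then have "1 \<le> dist x y / cM"
      using cM_pos by simp
    then obtain k where k: "L ^ k \<le> dist x y / cM" "dist x y / cM < L ^ Suc k"
      using ex_power_bracket[OF L_gt_1] by blast
    then have "dist x y < c * L powr (M + int (Suc k))"
      using cM_pos L_pos by (simp add: cM_def divide_less_eq powr_add powr_realpow mult_ac)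
    then have "real (dM L N \<nu> K M x y) \<le> real (2 * N ^ Suc k)"
      using dM_le_close[OF c(2) xy] of_nat_le_iff by blast
    also have "\<dots> = 2 * real N * (L ^ k) powr d"
      unfolding d_def using L_gt_1 one_le_N by (simp add: power_powr_log_ratio)
    also have "\<dots> \<le> 2 * real N * (dist x y / cM) powr d"
      using k(1) L_gt_1 L_pos one_le_N by (intro mult_left_mono powr_mono2) (auto simp: d_def)
    also have "\<dots> = C7 * norm (x - y) powr d"
      using cM_pos by (simp add: C7_def powr_divide dist_norm)
    finally show ?thesis
      by simp
  qed
  moreover have "0 < C7"
    using cM_pos one_le_N by (simp add: C7_def)
  ultimately show ?thesis
    unfolding d_def by blast
qed

end

lemma simple_nested_fractal_imp_nested_fractal:
  assumes "simple_nested_fractal L N \<nu> K"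
  shows "nested_fractal L N \<nu> K (ess_fixed_pts L N \<nu>)"
proof -
  have "finite (ess_fixed_pts L N \<nu>)"
    using assms by (intro card_ge_0_finite) (simp add: simple_nested_fractal_def)
  moreover have "\<forall>a\<in>ess_fixed_pts L N \<nu>. \<exists>i\<in>{1..N}. Psi L \<nu> i a = a"
    by (auto simp: ess_fixed_pts_def fixed_pts_def)
  ultimately show ?thesis
    using assms unfolding simple_nested_fractal_def nested_fractal_def
    by (elim conjE) (intro conjI; simp)
qed

theorem lemmaA3:
  fixes L :: real and N :: nat and \<nu> :: "nat \<Rightarrow> real ^ 2" and K :: "(real ^ 2) set"
  assumes "simple_nested_fractal L N \<nu> K"
  shows "\<forall>M::int. \<exists>C6>0. \<exists>C7>0. \<forall>x\<in>Kinf L K. \<forall>y\<in>Kinf L K.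
           C6 * norm (x - y) \<le> real (dM L N \<nu> K M x y) \<and>
           real (dM L N \<nu> K M x y) \<le> max 2 (C7 * norm (x - y) powr (ln (real N) / ln L))"
proof
  fix M :: int
  interpret nested_fractal L N \<nu> K "ess_fixed_pts L N \<nu>"
    using assms by (rule simple_nested_fractal_imp_nested_fractal)
  from dM_lower_bound[of M] dM_upper_bound[of M]
  show "\<exists>C6>0. \<exists>C7>0. \<forall>x\<in>Kinf L K. \<forall>y\<in>Kinf L K.
           C6 * norm (x - y) \<le> real (dM L N \<nu> K M x y) \<and>
           real (dM L N \<nu> K M x y) \<le> max 2 (C7 * norm (x - y) powr (ln (real N) / ln L))"
    by blast
qed

end
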